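(* Assume the setting described in the context and fix $T_1>0$. Suppose Assumptions (A1), (A2) and (A3) hold. Then \[\lim_{n\rightarrow\infty}\sup_{x\in F}\sup_{t\geq T_1}\left|\beta(n)q^n_{\lfloor\gamma(n)t\rfloor}(g_n(x))-q_t(x)\right|=0.\]
   Context: Let $(E,d_E)$ be a metric space and $F\subseteq E$ such that $F\cap\overline{B}_E(x,r)$ is compact for all $x\in E$, $r>0$; here $\overline{B}_E(x,r)$, $B_E(x,r)$ are the closed and open balls of $(E,d_E)$. Let $d_F:=d_E|_{F\times F}$ and let $B_F(x,r)$ be the open ball in $(F,d_F)$. Fix $\rho\in F$, a Radon measure $\nu$ of full support on $(F,d_F)$ (regarded also as a Borel measure on $E$ via $\nu(A):=\nu(A\cap F)$), and a function $(q_t(x))_{x\in F,t>0}$, jointly continuous in $(t,x)$, with $q_t\ge0$ and $\int_F q_t\,d\nu=1$ for each $t>0$. For a locally finite connected graph $G$ with at least two vertices, vertex set $V(G)$, edge set $E(G)$ and distinguished vertex $\rho(G)$: $d_G$ is the shortest-path metric and $B_G(x,r)$ the open $d_G$-ball; $\mu^G$ is a symmetric weight with $\mu^G_{xy}>0$ iff $\{x,y\}\in E(G)$; $\mu^G_x:=\sum_y\mu^G_{xy}$; $\nu^G(A):=\sum_{x\in A}\mu^G_x$. The discrete time simple random walk $X^G$ has transition probabilities $P_G(x,y)=\mu^G_{xy}/\mu^G_x$ and law $\mathbf{P}^G_x$ from $x$. Set $p^G_m(x,y):=\mathbf{P}^G_x(X^G_m=y)/\nu^G(\{y\})$, $q^G_m(x,y):=\frac12(p^G_m(x,y)+p^G_{m+1}(x,y))$,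 $q^G_m(x):=q^G_m(\rho(G),x)$. Let $(G^n)_{n\ge1}$ be locally finite connected graphs with $\#V(G^n)\ge2$, $V(G^n)\subseteq E$, $\rho(G^n)=\rho$; write $\nu^n,X^n,q^n,\mathbf{P}^{G^n}$ for $\nu^{G^n},X^{G^n},q^{G^n}$, etc. Let $(\alpha(n)),(\beta(n)),(\gamma(n))$ be non-negative sequences diverging to $\infty$. For $x\in E$, $g_n(x)$ denotes a point of $V(G^n)$ minimising $d_E(x,\cdot)$ over $V(G^n)$. Assumption (A1): (a) there is $c_1>0$ with $d_{G^n}(x,y)\ge c_1\alpha(n)d_E(x,y)$ for all $x,y\in V(G^n)$, $n\ge1$; and there is a non-negative sequence $\tilde\alpha(n)=o(\alpha(n))$ such that for each $r>0$ there exist $c_2<\infty$, $n_0$ with $d_{G^n}(x,y)\le c_2\alpha(n)d_E(x,y)+\tilde\alpha(n)$ for all $x,y\in V(G^n)\cap B_E(\rho,r)$, $n\ge n_0$. (b) For each $r>0$, $\lim_n\sup_{x\in B_F(\rho,r)}d_E(x,V(G^n))=0$. (c) For every $x\in F$, $r>0$, $\lim_n\beta(n)^{-1}\nu^n(B_E(x,r))=\nu(B_E(x,r))$. (d) For every compact interval $I\subset(0,\infty)$, $x\in F$, $r>0$, $\lim_n\mathbf{P}^{G^n}_\rho(X^n_{\lfloor\gamma(n)t\rfloor}\in B_E(x,r))=\int_{B_F(x,r)}q_t(y)\nu(dy)$ uniformly for $t\in I$. Assumption (A2): for every compact interval $I\subset(0,\infty)$ and $r>0$, \[\lim_{\delta\to0}\limsup_{n\to\infty}\sup_{\substack{x,y\in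 B_{G^n}(\rho,\alpha(n)r):\\ d_{G^n}(x,y)\le\alpha(n)\delta}}\sup_{t\in I}\beta(n)\left|q^n_{\lfloor\gamma(n)t\rfloor}(x)-q^n_{\lfloor\gamma(n)t\rfloor}(y)\right|=0.\] Assumption (A3): $(F,d_F)$ has the midpoint property (for all $x,y\in F$ there is $z\in F$ with $d_F(x,z)=\frac12 d_F(x,y)=d_F(z,y)$), and (a) $\lim_{t\to\infty}\sup_{x\in F}q_t(x)=0$ and $\lim_{r\to\infty}\sup_{x\in F\setminus B_F(\rho,r)}\sup_{t\in I}q_t(x)=0$ for every compact interval $I\subset(0,\infty)$; (b) $\lim_{t\to\infty}\limsup_{n\to\infty}\sup_{x\in V(G^n)}\beta(n)q^n_{\lfloor\gamma(n)t\rfloor}(x)=0$ and, for every compact interval $I\subset(0,\infty)$, $\lim_{r\to\infty}\limsup_{n\to\infty}\sup_{x\in V(G^n)\setminus B_{G^n}(\rho,\alpha(n)r)}\sup_{t\in I}\beta(n)q^n_{\lfloor\gamma(n)t\rfloor}(x)=0$. *)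

theory Defs
  imports "HOL-Probability.Probability" "HOL-Library.Landau_Symbols"
begin

text \<open>A weighted graph is given by a vertex set V and a symmetric conductance
  function mu, with mu x y > 0 iff {x,y} is an edge.\<close>

definition adj :: "('a \<Rightarrow> 'a \<Rightarrow> real) \<Rightarrow> 'a \<Rightarrow> 'a \<Rightarrow> bool" where
  "adj mu x y \<longleftrightarrow> 0 < mu x y"

definition wgraph :: "'a set \<Rightarrow> ('a \<Rightarrow> 'a \<Rightarrow> real) \<Rightarrow> bool" where
  "wgraph V mu \<longleftrightarrow>
     (\<forall>x y. mu x y = mu y x) \<and> (\<forall>x y. 0 \<le> mu x y) \<and>
     (\<forall>x y. 0 < mu x y \<longrightarrow> x \<in> V \<and> y \<in> V \<and> x \<noteq> y) \<and>
     (\<forall>x\<in>V. finite {y. 0 < mu x y}) \<and>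
     (\<forall>x\<in>V. \<forall>y\<in>V. (adj mu)\<^sup>*\<^sup>* x y) \<and>
     (\<exists>x\<in>V. \<exists>y\<in>V. x \<noteq> y)"

definition gdist :: "('a \<Rightarrow> 'a \<Rightarrow> real) \<Rightarrow> 'a \<Rightarrow> 'a \<Rightarrow> nat" where
  "gdist mu x y = (LEAST k. (((adj mu) ^^ k) :: 'a \<Rightarrow> 'a \<Rightarrow> bool) x y)"

definition gball :: "'a set \<Rightarrow> ('a \<Rightarrow> 'a \<Rightarrow> real) \<Rightarrow> 'a \<Rightarrow> real \<Rightarrow> 'a set" where
  "gball V mu x s = {y \<in> V. real (gdist mu x y) < s}"

definition wdeg :: "('a \<Rightarrow> 'a \<Rightarrow> real) \<Rightarrow> 'a \<Rightarrow> real" where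
  "wdeg mu x = (\<Sum>y\<in>{y. 0 < mu x y}. mu x y)"

definition gmeas :: "'a set \<Rightarrow> ('a \<Rightarrow> 'a \<Rightarrow> real) \<Rightarrow> 'a set \<Rightarrow> ennreal" where
  "gmeas V mu A = (\<integral>\<^sup>+ x. ennreal (wdeg mu x) \<partial>count_space (A \<inter> V))"

fun stepprob :: "('a \<Rightarrow> 'a \<Rightarrow> real) \<Rightarrow> nat \<Rightarrow> 'a \<Rightarrow> 'a \<Rightarrow> real" where
  "stepprob mu 0 x y = (if x = y then 1 else 0)"
| "stepprob mu (Suc m) x y =
     (\<Sum>z\<in>{z. 0 < mu x z}. mu x z / wdeg mu x * stepprob mu m z y)"

definition hitprob :: "('a \<Rightarrow> 'a \<Rightarrow> real) \<Rightarrow> nat \<Rightarrow> 'a \<Rightarrow> 'a set \<Rightarrow> real" where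
  "hitprob mu m x A = (\<Sum>\<^sub>\<infinity> y\<in>A. stepprob mu m x y)"

definition pdens :: "('a \<Rightarrow> 'a \<Rightarrow> real) \<Rightarrow> nat \<Rightarrow> 'a \<Rightarrow> 'a \<Rightarrow> real" where
  "pdens mu m x y = stepprob mu m x y / wdeg mu y"

definition qdens :: "('a \<Rightarrow> 'a \<Rightarrow> real) \<Rightarrow> nat \<Rightarrow> 'a \<Rightarrow> 'a \<Rightarrow> real" where
  "qdens mu m x y = (pdens mu m x y + pdens mu (Suc m) x y) / 2"

end

theory Submission
  imports Defs
begin

text \<open>Fix \<epsilon> > 0. For large times both q_t and the rescaled discrete densities are uniformly small
  by (A3); on the graph side this persists for all later times, because q^G_{m+1}(\<rho>, \<cdot>) at a vertex
  is an average of q^G_m(\<rho>, \<cdot>) over its neighbours. Far from \<rho> both are small by (A3) as well,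
  using the midpoint property and (A1a, b) to keep g_n(x) far from \<rho> in the graph metric. The
  remaining region F \<inter> cball \<rho> R is compact and is covered by finitely many small balls B(c, r).
  On each of them q is nearly constant, and so is \<beta>(n) q^n by the equicontinuity (A2) transported
  through (A1a). Hence the averaged probability that the walk is in B(c, r) at the steps
  \<lfloor>\<gamma>(n)t\<rfloor> and \<lfloor>\<gamma>(n)t\<rfloor> + 1 is close to \<beta>(n) q^n(g_n(x)) \<nu>^n(B(c, r)) / \<beta>(n), and by (A1d) also to
  q_t(x) \<nu>(B(c, r)); the two masses agree in the limit by (A1c).\<close>

lemma set_integral_approx:
  fixes f :: "'a \<Rightarrow> real"
  assumes f: "integrable M f" and A: "A \<in> sets M" "emeasure M A < \<infinity>"
    and close: "\<forall>x\<in>A. \<bar>f x - c\<bar> \<le> k"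
  shows "\<bar>set_lebesgue_integral M A f - c * measure M A\<bar> \<le> k * measure M A"
proof -
  have iA: "integrable M (indicat_real A)" using A by (rule integrable_real_indicator)
  have i1: "integrable M (\<lambda>x. indicat_real A x * f x)"
    using integrable_mult_indicator[OF A(1) f] by simp
  have sp: "A \<inter> space M = A" using sets.sets_into_space[OF A(1)] by blast
  have "set_lebesgue_integral M A f - c * measure M A
      = (LINT x|M. indicat_real A x * f x - indicat_real A x * c)"
    using i1 iA by (simp add: set_lebesgue_integral_def integral_indicator sp)
  also have "norm \<dots> \<le> (LINT x|M. norm (indicat_real A x * f x - indicat_real A x * c))"
    by (rule integral_norm_bound)
  also have "\<dots> \<le> (LINT x|M. indicat_real A x * k)"
  proof (rule integral_mono)
    show "integrable M (\<lambda>x. norm (indicat_real A x * f x - indicat_real A x * c))"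
      using i1 iA by simp
    show "integrable M (\<lambda>x. indicat_real A x * k)" using iA by simp
    show "norm (indicat_real A x * f x - indicat_real A x * c) \<le> indicat_real A x * k" for x
      using close by (cases "x \<in> A") (auto simp: algebra_simps)
  qed
  also have "\<dots> = k * measure M A"
    by (simp add: integral_indicator sp)
  finally show ?thesis by simp
qed

lemma nn_integral_weighted_approx:
  fixes f w :: "'a \<Rightarrow> real"
  assumes w: "w \<in> borel_measurable N" and W: "(\<integral>\<^sup>+x. ennreal (w x) \<partial>N) = ennreal W"
    and I: "(\<integral>\<^sup>+x. ennreal (f x * w x) \<partial>N) = ennreal I"
    and nonneg: "0 \<le> W" "0 \<le> I" "0 \<le> c" "0 \<le> k"
    and pointwise: "\<And>x. x \<in> space N \<Longrightarrow> 0 \<le> w x \<and> 0 \<le> f x \<and> \<bar>f x - c\<bar> \<le> k"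
  shows "\<bar>I - c * W\<bar> \<le> k * W"
proof -
  have "ennreal I \<le> (\<integral>\<^sup>+x. ennreal (c + k) * ennreal (w x) \<partial>N)"
    unfolding I[symmetric]
  proof (rule nn_integral_mono)
    fix x assume "x \<in> space N"
    from pointwise[OF this] have "f x * w x \<le> (c + k) * w x"
      by (intro mult_right_mono) (auto simp: abs_le_iff)
    then have "ennreal (f x * w x) \<le> ennreal ((c + k) * w x)" by (rule ennreal_leI)
    also have "\<dots> = ennreal (c + k) * ennreal (w x)" using nonneg by (intro ennreal_mult') simp
    finally show "ennreal (f x * w x) \<le> ennreal (c + k) * ennreal (w x)" .
  qed
  also have "\<dots> = ennreal (c + k) * ennreal W"
    unfolding W[symmetric] using w by (intro nn_integral_cmult) simp
  also have "\<dots> = ennreal ((c + k) * W)"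
    using nonneg by (intro ennreal_mult'[symmetric]) simp
  finally have upper: "I \<le> (c + k) * W"
    using nonneg by (simp add: ennreal_le_iff)
  have "ennreal (max (c - k) 0 * W) = ennreal (max (c - k) 0) * ennreal W"
    by (simp add: ennreal_mult')
  also have "\<dots> = (\<integral>\<^sup>+x. ennreal (max (c - k) 0) * ennreal (w x) \<partial>N)"
    unfolding W[symmetric] using w by (intro nn_integral_cmult[symmetric]) simp
  also have "\<dots> \<le> ennreal I"
    unfolding I[symmetric]
  proof (rule nn_integral_mono)
    fix x assume "x \<in> space N"
    from pointwise[OF this] have "max (c - k) 0 * w x \<le> f x * w x"
      by (intro mult_right_mono) (auto simp: abs_le_iff)
    then have "ennreal (max (c - k) 0 * w x) \<le> ennreal (f x * w x)" by (rule ennreal_leI)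
    then show "ennreal (max (c - k) 0) * ennreal (w x) \<le> ennreal (f x * w x)"
      by (simp add: ennreal_mult')
  qed
  finally have "max (c - k) 0 * W \<le> I"
    using nonneg by (simp add: ennreal_le_iff)
  then have "(c - k) * W \<le> I"
    using nonneg by (smt (verit) mult_right_mono)
  with upper show ?thesis by (auto simp: algebra_simps abs_le_iff)
qed

lemma abs_average_le:
  fixes a b A B z \<eta> k :: real
  assumes "\<bar>a - A\<bar> < \<eta>" "\<bar>b - B\<bar> < \<eta>" "\<bar>A - z\<bar> \<le> k" "\<bar>B - z\<bar> \<le> k"
  shows "\<bar>(a + b) / 2 - z\<bar> \<le> \<eta> + k"
  using assms by (simp add: abs_le_iff abs_less_iff field_simps)

lemma approx_quotient:
  fixes Q q h m v \<epsilon> :: real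
  assumes h: "\<bar>h - Q * m\<bar> \<le> \<epsilon> / 16 * m" "\<bar>h - q * v\<bar> \<le> \<epsilon> / 8 * v"
    and m: "\<bar>q\<bar> * \<bar>m - v\<bar> \<le> \<epsilon> / 16 * v" "\<bar>m - v\<bar> \<le> v / 2"
    and "0 < v" "0 < \<epsilon>"
  shows "\<bar>Q - q\<bar> < \<epsilon>"
proof -
  have "0 < m" "v \<le> 2 * m" using m(2) \<open>0 < v\<close> unfolding abs_le_iff by linarith+
  have "\<bar>Q - q\<bar> * m = \<bar>(Q - q) * m\<bar>" using \<open>0 < m\<close> by (simp add: abs_mult)
  also have "\<dots> = \<bar>(Q * m - h) + (h - q * v) + q * (v - m)\<bar>" by (simp add: algebra_simps)
  also have "\<dots> \<le> \<bar>Q * m - h\<bar> + \<bar>h - q * v\<bar> + \<bar>q\<bar> * \<bar>v - m\<bar>"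
    unfolding abs_mult[symmetric]
    by (rule order_trans[OF abs_triangle_ineq add_right_mono[OF abs_triangle_ineq]])
  also have "\<dots> \<le> \<epsilon> / 16 * m + \<epsilon> / 8 * v + \<epsilon> / 16 * v"
    using h m unfolding abs_minus_commute[of "Q * m" h] abs_minus_commute[of v m] by linarith
  also have "\<dots> \<le> 7 * \<epsilon> / 16 * m"
    using mult_left_mono[OF \<open>v \<le> 2 * m\<close>, of "3 * \<epsilon> / 16"] \<open>0 < \<epsilon>\<close> by simp
  also have "\<dots> < \<epsilon> * m" using \<open>0 < m\<close> \<open>0 < \<epsilon>\<close> by simp
  finally show ?thesis using \<open>0 < m\<close> by simp
qed

lemma nat_floor_shift:
  fixes c t :: real
  assumes "0 < c" "0 \<le> t"
  shows "nat \<lfloor>c * (t + 1 / c)\<rfloor> = Suc (nat \<lfloor>c * t\<rfloor>)"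
proof -
  have "c * (t + 1 / c) = c * t + 1" using assms by (simp add: field_simps)
  then show ?thesis using assms by (simp add: nat_add_distrib)
qed

section \<open>Random walks on weighted graphs\<close>

lemma wgraph_finite_neighbours:
  assumes "wgraph V mu"
  shows "finite {y. 0 < mu x y}"
proof (cases "x \<in> V")
  case False
  with assms have "{y. 0 < mu x y} = {}" unfolding wgraph_def by blast
  then show ?thesis by simp
next
  case True
  with assms show ?thesis unfolding wgraph_def by blast
qed

lemma wgraph_sym: "wgraph V mu \<Longrightarrow> mu x y = mu y x"
  unfolding wgraph_def by blast

lemma wgraph_edge_in_V: "wgraph V mu \<Longrightarrow> 0 < mu x y \<Longrightarrow> x \<in> V \<and> y \<in> V"
  unfolding wgraph_def by blast

lemma wdeg_nonneg: "0 \<le> wdeg mu x"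
  unfolding wdeg_def by (intro sum_nonneg) auto

lemma wdeg_pos:
  assumes w: "wgraph V mu" and y: "y \<in> V"
  shows "0 < wdeg mu y"
proof -
  obtain y' where "y' \<in> V" "y' \<noteq> y" using w unfolding wgraph_def by blast
  then have "(adj mu)\<^sup>*\<^sup>* y y'" using w y unfolding wgraph_def by blast
  then obtain z where z: "0 < mu y z"
    using \<open>y' \<noteq> y\<close> unfolding adj_def by (metis converse_rtranclpE)
  have "mu y z \<le> wdeg mu y" unfolding wdeg_def
    using z wgraph_finite_neighbours[OF w, of y] by (intro member_le_sum) auto
  then show ?thesis using z by simp
qed

lemma sum_transition_weights:
  assumes "wgraph V mu" "y \<in> V"
  shows "(\<Sum>z\<in>{z. 0 < mu y z}. mu y z / wdeg mu y) = 1"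
  using wdeg_pos[OF assms] by (simp add: wdeg_def flip: sum_divide_distrib)

lemma stepprob_nonneg: "0 \<le> stepprob mu m x y"
  by (induction m arbitrary: x)
    (auto intro!: sum_nonneg mult_nonneg_nonneg divide_nonneg_nonneg wdeg_nonneg)

lemma qdens_nonneg: "0 \<le> qdens mu m x y"
  unfolding qdens_def pdens_def
  by (intro divide_nonneg_nonneg add_nonneg_nonneg stepprob_nonneg wdeg_nonneg) simp

lemma stepprob_Suc_last:
  assumes w: "wgraph V mu"
  shows "stepprob mu (Suc m) x y = (\<Sum>z\<in>{z. 0 < mu y z}. stepprob mu m x z * mu z y / wdeg mu z)"
proof (induction m arbitrary: x)
  case 0
  have fin: "finite {z. 0 < mu x z}" "finite {z. 0 < mu y z}"
    using wgraph_finite_neighbours[OF w] by auto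
  have "stepprob mu (Suc 0) x y
      = (\<Sum>z\<in>{z. 0 < mu x z}. if z = y then mu x z / wdeg mu x else 0)"
    by (auto intro: sum.cong)
  also have "\<dots> = (if 0 < mu x y then mu x y / wdeg mu x else 0)"
    using fin by (simp add: sum.delta')
  also have "\<dots> = (\<Sum>z\<in>{z. 0 < mu y z}. if x = z then mu x y / wdeg mu x else 0)"
    using fin wgraph_sym[OF w, of x y] by (simp add: sum.delta)
  also have "\<dots> = (\<Sum>z\<in>{z. 0 < mu y z}. stepprob mu 0 x z * mu z y / wdeg mu z)"
    by (auto intro: sum.cong)
  finally show ?case .
next
  case (Suc m)
  have "stepprob mu (Suc (Suc m)) x y
      = (\<Sum>z\<in>{z. 0 < mu x z}. \<Sum>u\<in>{u. 0 < mu y u}.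
            mu x z / wdeg mu x * (stepprob mu m z u * mu u y / wdeg mu u))"
    using Suc.IH by (simp add: sum_distrib_left)
  also have "\<dots> = (\<Sum>u\<in>{u. 0 < mu y u}. \<Sum>z\<in>{z. 0 < mu x z}.
            mu x z / wdeg mu x * (stepprob mu m z u * mu u y / wdeg mu u))"
    by (rule sum.swap)
  also have "\<dots> = (\<Sum>u\<in>{u. 0 < mu y u}. stepprob mu (Suc m) x u * mu u y / wdeg mu u)"
    by (simp add: sum_distrib_right sum_divide_distrib mult.assoc)
  finally show ?case .
qed

lemma pdens_Suc:
  assumes w: "wgraph V mu"
  shows "pdens mu (Suc m) x y = (\<Sum>z\<in>{z. 0 < mu y z}. mu y z / wdeg mu y * pdens mu m x z)"
  unfolding pdens_def stepprob_Suc_last[OF w] sum_divide_distrib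
  by (rule sum.cong) (auto simp: wgraph_sym[OF w, of y] field_simps)

lemma qdens_Suc:
  assumes w: "wgraph V mu"
  shows "qdens mu (Suc m) x y = (\<Sum>z\<in>{z. 0 < mu y z}. mu y z / wdeg mu y * qdens mu m x z)"
  unfolding qdens_def pdens_Suc[OF w, of "Suc m" x y] pdens_Suc[OF w, of m x y]
  by (simp add: sum.distrib sum_divide_distrib distrib_left add_divide_distrib)

lemma qdens_Suc_le:
  assumes w: "wgraph V mu" and y: "y \<in> V" and bound: "\<forall>z\<in>V. qdens mu m x z \<le> c"
  shows "qdens mu (Suc m) x y \<le> c"
proof -
  have "qdens mu (Suc m) x y \<le> (\<Sum>z\<in>{z. 0 < mu y z}. mu y z / wdeg mu y * c)"
    unfolding qdens_Suc[OF w]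
  proof (rule sum_mono)
    fix z assume "z \<in> {z. 0 < mu y z}"
    then have "z \<in> V" "0 \<le> mu y z / wdeg mu y"
      using wgraph_edge_in_V[OF w] wdeg_nonneg[of mu y] by auto
    then show "mu y z / wdeg mu y * qdens mu m x z \<le> mu y z / wdeg mu y * c"
      using bound by (intro mult_left_mono) auto
  qed
  also have "\<dots> = (\<Sum>z\<in>{z. 0 < mu y z}. mu y z / wdeg mu y) * c"
    by (rule sum_distrib_right[symmetric])
  also have "\<dots> = c"
    using sum_transition_weights[OF w y] by simp
  finally show ?thesis .
qed

lemma qdens_le_later:
  assumes w: "wgraph V mu" and bound: "\<forall>z\<in>V. qdens mu m x z \<le> c" and "m \<le> m'"
  shows "\<forall>z\<in>V. qdens mu m' x z \<le> c"
  using \<open>m \<le> m'\<close>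
proof (induction m' rule: dec_induct)
  case (step k)
  then show ?case using qdens_Suc_le[OF w] by blast
qed (use bound in simp)

lemma finite_stepprob_support:
  assumes w: "wgraph V mu"
  shows "finite {y. stepprob mu m x y \<noteq> 0}"
proof (induction m arbitrary: x)
  case 0
  have "{y. stepprob mu 0 x y \<noteq> 0} = {x}" by auto
  then show ?case by simp
next
  case (Suc m)
  have "{y. stepprob mu (Suc m) x y \<noteq> 0} \<subseteq> (\<Union>z\<in>{z. 0 < mu x z}. {y. stepprob mu m z y \<noteq> 0})"
    by (force elim: sum.not_neutral_contains_not_neutral)
  moreover have "finite (\<Union>z\<in>{z. 0 < mu x z}. {y. stepprob mu m z y \<noteq> 0})"
    using wgraph_finite_neighbours[OF w] Suc.IH by blast
  ultimately show ?case by (rule finite_subset)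
qed

lemma stepprob_support_in_V:
  assumes w: "wgraph V mu" and x: "x \<in> V" and "stepprob mu m x y \<noteq> 0"
  shows "y \<in> V"
proof (cases m)
  case 0 then show ?thesis using assms by (auto split: if_splits)
next
  case (Suc k)
  then have "(\<Sum>z\<in>{z. 0 < mu y z}. stepprob mu k x z * mu z y / wdeg mu z) \<noteq> 0"
    using assms stepprob_Suc_last[OF w] by simp
  then obtain z where "0 < mu y z" by (metis (mono_tags, lifting) empty_Collect_eq sum.empty)
  then show ?thesis using wgraph_edge_in_V[OF w] by blast
qed

lemma stepprob_eq_pdens:
  assumes w: "wgraph V mu" and x: "x \<in> V"
  shows "stepprob mu m x y = pdens mu m x y * wdeg mu y"
proof (cases "stepprob mu m x y = 0")
  case False
  then have "0 < wdeg mu y" using stepprob_support_in_V[OF w x] wdeg_pos[OF w] by blast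
  then show ?thesis by (simp add: pdens_def)
qed (simp add: pdens_def)

lemma hitprob_eq_sum:
  assumes "finite S" and "{y. stepprob mu m x y \<noteq> 0} \<subseteq> S"
  shows "hitprob mu m x A = (\<Sum>y\<in>A \<inter> S. stepprob mu m x y)"
proof -
  have "hitprob mu m x A = infsum (stepprob mu m x) (A \<inter> S)"
    unfolding hitprob_def by (rule infsum_cong_neutral) (use assms in auto)
  then show ?thesis using assms by simp
qed

lemma hitprob_average_eq_nn_integral:
  assumes w: "wgraph V mu" and x: "x \<in> V"
  shows "ennreal ((hitprob mu m x A + hitprob mu (Suc m) x A) / 2)
       = (\<integral>\<^sup>+y. ennreal (qdens mu m x y * wdeg mu y) \<partial>count_space (A \<inter> V))"
proof -
  define S where "S = {y. stepprob mu m x y \<noteq> 0} \<union> {y. stepprob mu (Suc m) x y \<noteq> 0}"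
  have S: "finite S" unfolding S_def using finite_stepprob_support[OF w] by blast
  have SV: "S \<subseteq> V" unfolding S_def using stepprob_support_in_V[OF w x] by blast
  have "(hitprob mu m x A + hitprob mu (Suc m) x A) / 2
      = ((\<Sum>y\<in>A \<inter> S. stepprob mu m x y) + (\<Sum>y\<in>A \<inter> S. stepprob mu (Suc m) x y)) / 2"
    using hitprob_eq_sum[OF S, of mu m x A] hitprob_eq_sum[OF S, of mu "Suc m" x A]
    unfolding S_def by auto
  also have "\<dots> = (\<Sum>y\<in>A \<inter> S. (stepprob mu m x y + stepprob mu (Suc m) x y) / 2)"
    by (simp only: sum_divide_distrib[symmetric] sum.distrib)
  also have "\<dots> = (\<Sum>y\<in>A \<inter> S. qdens mu m x y * wdeg mu y)"
    unfolding qdens_def stepprob_eq_pdens[OF w x] by (rule sum.cong) (auto simp: algebra_simps)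
  also have "ennreal \<dots> = (\<integral>\<^sup>+y. ennreal (qdens mu m x y * wdeg mu y) \<partial>count_space (A \<inter> V))"
  proof (subst nn_integral_count_space')
    show "finite (A \<inter> S)" "A \<inter> S \<subseteq> A \<inter> V" using S SV by auto
    show "ennreal (qdens mu m x y * wdeg mu y) = 0" if "y \<in> A \<inter> V" "y \<notin> A \<inter> S" for y
      using that by (simp add: S_def qdens_def pdens_def)
  qed (simp_all add: sum_ennreal qdens_nonneg wdeg_nonneg)
  finally show ?thesis .
qed

lemma hitprob_average_rescaled_approx:
  assumes w: "wgraph V mu" and x: "x \<in> V" and fin: "gmeas V mu A \<noteq> \<top>"
    and \<beta>: "0 < \<beta>" and "0 \<le> k"
    and close: "\<forall>y\<in>A \<inter> V. \<beta> * \<bar>qdens mu m x z - qdens mu m x y\<bar> \<le> k"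
  shows "\<bar>(hitprob mu m x A + hitprob mu (Suc m) x A) / 2
           - \<beta> * qdens mu m x z * (enn2real (gmeas V mu A) / \<beta>)\<bar>
         \<le> k * (enn2real (gmeas V mu A) / \<beta>)"
proof -
  have "\<bar>(hitprob mu m x A + hitprob mu (Suc m) x A) / 2 - qdens mu m x z * enn2real (gmeas V mu A)\<bar>
      \<le> k / \<beta> * enn2real (gmeas V mu A)"
  proof (rule nn_integral_weighted_approx[where N = "count_space (A \<inter> V)"])
    show "(\<integral>\<^sup>+y. ennreal (wdeg mu y) \<partial>count_space (A \<inter> V)) = ennreal (enn2real (gmeas V mu A))"
      using fin by (simp add: gmeas_def ennreal_enn2real_if)
    show "(\<integral>\<^sup>+y. ennreal (qdens mu m x y * wdeg mu y) \<partial>count_space (A \<inter> V))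
        = ennreal ((hitprob mu m x A + hitprob mu (Suc m) x A) / 2)"
      by (rule hitprob_average_eq_nn_integral[OF w x, symmetric])
    show "0 \<le> (hitprob mu m x A + hitprob mu (Suc m) x A) / 2"
      unfolding hitprob_def by (intro divide_nonneg_nonneg add_nonneg_nonneg infsum_nonneg stepprob_nonneg) auto
    show "\<And>y. y \<in> space (count_space (A \<inter> V)) \<Longrightarrow>
        0 \<le> wdeg mu y \<and> 0 \<le> qdens mu m x y \<and> \<bar>qdens mu m x y - qdens mu m x z\<bar> \<le> k / \<beta>"
      using close \<beta> by (auto simp: wdeg_nonneg qdens_nonneg pos_le_divide_eq abs_minus_commute mult.commute)
  qed (use \<beta> \<open>0 \<le> k\<close> in \<open>simp_all add: qdens_nonneg\<close>)
  then show ?thesis using \<beta> by (simp add: field_simps)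
qed

lemma rescaled_qdens_bound_persists:
  assumes w: "wgraph V mu" and "0 \<le> \<beta>" "0 \<le> \<gamma>" "T \<le> t" "0 \<le> e"
    and bound: "\<forall>v\<in>V. \<beta> * qdens mu (nat \<lfloor>\<gamma> * T\<rfloor>) x v \<le> e"
  shows "\<forall>v\<in>V. \<beta> * qdens mu (nat \<lfloor>\<gamma> * t\<rfloor>) x v \<le> e"
proof (cases "\<beta> = 0")
  case False
  then have \<beta>: "0 < \<beta>" using assms by simp
  with bound have "\<forall>v\<in>V. qdens mu (nat \<lfloor>\<gamma> * T\<rfloor>) x v \<le> e / \<beta>"
    by (simp add: pos_le_divide_eq mult.commute)
  moreover have "nat \<lfloor>\<gamma> * T\<rfloor> \<le> nat \<lfloor>\<gamma> * t\<rfloor>"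
    using assms by (intro nat_mono floor_mono mult_left_mono)
  ultimately have "\<forall>v\<in>V. qdens mu (nat \<lfloor>\<gamma> * t\<rfloor>) x v \<le> e / \<beta>"
    by (rule qdens_le_later[OF w])
  with \<beta> show ?thesis by (simp add: pos_le_divide_eq mult.commute)
qed (use assms in simp)

section \<open>Midpoints and nearest points\<close>

definition has_midpoints :: "'a::metric_space set \<Rightarrow> bool" where
  "has_midpoints F \<longleftrightarrow> (\<forall>x\<in>F. \<forall>y\<in>F. \<exists>z\<in>F. dist x z = dist x y / 2 \<and> dist z y = dist x y / 2)"

lemma has_midpoints_dyadic_point:
  assumes mid: "has_midpoints F" and "\<rho> \<in> F" "x \<in> F"
  shows "\<exists>z\<in>F. dist \<rho> z = dist \<rho> x / 2 ^ k \<and> dist z x \<le> dist \<rho> x - dist \<rho> x / 2 ^ k"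
proof (induction k)
  case (Suc k)
  then obtain z where z: "z \<in> F" "dist \<rho> z = dist \<rho> x / 2 ^ k"
    "dist z x \<le> dist \<rho> x - dist \<rho> x / 2 ^ k"
    by blast
  obtain w where w: "w \<in> F" "dist \<rho> w = dist \<rho> z / 2" "dist w z = dist \<rho> z / 2"
    using mid \<open>\<rho> \<in> F\<close> z(1) unfolding has_midpoints_def by blast
  have "dist w x \<le> dist w z + dist z x" by (rule dist_triangle)
  with w z show ?case by (intro bexI[of _ w]) auto
qed (use \<open>x \<in> F\<close> in auto)

lemma has_midpoints_point_below_radius:
  assumes mid: "has_midpoints F" and "\<rho> \<in> F" "x \<in> F" and R: "0 < R" "R \<le> dist \<rho> x"
  shows "\<exists>z\<in>F. R / 2 \<le> dist \<rho> z \<and> dist \<rho> z < R \<and> dist z x \<le> dist \<rho> x - dist \<rho> z"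
proof -
  define D where "D = dist \<rho> x"
  obtain k0 where "D / R < 2 ^ k0" using real_arch_pow[of 2 "D / R"] by auto
  then have "\<exists>k. D / 2 ^ k < R" using R by (auto simp: field_simps)
  then obtain k where k: "D / 2 ^ k < R" and least: "\<forall>j<k. \<not> D / 2 ^ j < R"
    by (auto simp: exists_least_iff[of "\<lambda>k. D / 2 ^ k < R"])
  obtain j where j: "k = Suc j" using k R unfolding D_def by (cases k) auto
  then have "\<not> D / 2 ^ j < R" using least by blast
  then have "R / 2 \<le> D / 2 ^ k" using j by (simp add: field_simps)
  moreover obtain z where "z \<in> F" "dist \<rho> z = D / 2 ^ k" "dist z x \<le> D - D / 2 ^ k"
    using has_midpoints_dyadic_point[OF assms(1-3), of k] unfolding D_def by blast
  ultimately show ?thesis using k unfolding D_def by (intro bexI[of _ z]) auto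
qed

lemma dist_le_infdist_of_nearest:
  fixes x :: "'a::metric_space"
  assumes "V \<noteq> {}" "\<forall>v\<in>V. dist x g \<le> dist x v"
  shows "dist x g \<le> infdist x V"
  using assms unfolding infdist_def by (auto intro!: cINF_greatest)

section \<open>Convergence of the rescaled densities\<close>

text \<open>The hypotheses of the theorem, except space \<nu> = F and the normalisation of q_t, which the
  argument does not use.\<close>
locale rescaled_walk_convergence =
  fixes F :: "'a::metric_space set" and \<rho> :: 'a and \<nu> :: "'a measure"
    and q :: "real \<Rightarrow> 'a \<Rightarrow> real"
    and V :: "nat \<Rightarrow> 'a set" and \<mu> :: "nat \<Rightarrow> 'a \<Rightarrow> 'a \<Rightarrow> real"
    and \<alpha> \<beta> \<gamma> :: "nat \<Rightarrow> real" and g :: "nat \<Rightarrow> 'a \<Rightarrow> 'a" and T1 :: real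
  assumes F_compact: "\<forall>x r. 0 < r \<longrightarrow> compact (F \<inter> cball x r)"
    and nu_sets: "sets \<nu> = sets (restrict_space borel F)"
    and nu_radon: "\<forall>x r. emeasure \<nu> (F \<inter> cball x r) < \<infinity>"
    and nu_supp: "\<forall>x\<in>F. \<forall>r>0. 0 < emeasure \<nu> (F \<inter> ball x r)"
    and q_cont: "continuous_on ({0<..} \<times> F) (\<lambda>(t, x). q t x)"
    and q_nonneg: "\<forall>t>0. \<forall>x\<in>F. 0 \<le> q t x"
    and q_integrable: "\<forall>t>0. integrable \<nu> (q t)"
    and graphs: "\<forall>n\<ge>1. wgraph (V n) (\<mu> n) \<and> \<rho> \<in> V n"
    and seq_nonneg: "\<forall>n. 0 \<le> \<alpha> n \<and> 0 \<le> \<beta> n \<and> 0 \<le> \<gamma> n"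
    and alpha_lim: "filterlim \<alpha> at_top sequentially"
    and beta_lim: "filterlim \<beta> at_top sequentially"
    and gamma_lim: "filterlim \<gamma> at_top sequentially"
    and g_min: "\<forall>n\<ge>1. \<forall>x\<in>F. g n x \<in> V n \<and> (\<forall>v\<in>V n. dist x (g n x) \<le> dist x v)"
    and T1_pos: "0 < T1"
    and A1a_lower: "\<exists>c1>0. \<forall>n\<ge>1. \<forall>x\<in>V n. \<forall>y\<in>V n.
                      real (gdist (\<mu> n) x y) \<ge> c1 * \<alpha> n * dist x y"
    and A1a_upper: "\<exists>\<alpha>' :: nat \<Rightarrow> real. (\<forall>n. 0 \<le> \<alpha>' n) \<and> \<alpha>' \<in> o(\<alpha>) \<and>
                      (\<forall>r>0. \<exists>c2 n0. \<forall>n\<ge>n0. \<forall>x\<in>V n \<inter> ball \<rho> r. \<forall>y\<in>V n \<inter> ball \<rho> r.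
                         real (gdist (\<mu> n) x y) \<le> c2 * \<alpha> n * dist x y + \<alpha>' n)"
    and A1b: "\<forall>r>0. \<forall>\<epsilon>>0. \<forall>\<^sub>F n in sequentially. \<forall>x\<in>F \<inter> ball \<rho> r. infdist x (V n) \<le> \<epsilon>"
    and A1c: "\<forall>x\<in>F. \<forall>r>0. ((\<lambda>n. ennreal (1 / \<beta> n) * gmeas (V n) (\<mu> n) (ball x r))
                 \<longlongrightarrow> emeasure \<nu> (F \<inter> ball x r)) sequentially"
    and A1d: "\<forall>a b x r. 0 < a \<longrightarrow> x \<in> F \<longrightarrow> 0 < r \<longrightarrow>
                uniform_limit {a..b}
                  (\<lambda>n t. hitprob (\<mu> n) (nat \<lfloor>\<gamma> n * t\<rfloor>) \<rho> (ball x r))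
                  (\<lambda>t. set_lebesgue_integral \<nu> (F \<inter> ball x r) (q t)) sequentially"
    and A2: "\<forall>a b r. 0 < a \<longrightarrow> 0 < r \<longrightarrow> (\<forall>\<epsilon>>0. \<exists>\<delta>>0. \<forall>\<^sub>F n in sequentially.
                \<forall>x\<in>gball (V n) (\<mu> n) \<rho> (\<alpha> n * r). \<forall>y\<in>gball (V n) (\<mu> n) \<rho> (\<alpha> n * r).
                  real (gdist (\<mu> n) x y) \<le> \<alpha> n * \<delta> \<longrightarrow>
                  (\<forall>t\<in>{a..b}. \<beta> n * \<bar>qdens (\<mu> n) (nat \<lfloor>\<gamma> n * t\<rfloor>) \<rho> x
                                     - qdens (\<mu> n) (nat \<lfloor>\<gamma> n * t\<rfloor>) \<rho> y\<bar> \<le> \<epsilon>))"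
    and midpoint: "has_midpoints F"
    and rho_F: "\<rho> \<in> F"
    and A3a_time: "\<forall>\<epsilon>>0. \<forall>\<^sub>F t in at_top. \<forall>x\<in>F. q t x \<le> \<epsilon>"
    and A3a_space: "\<forall>a b. 0 < a \<longrightarrow> (\<forall>\<epsilon>>0. \<forall>\<^sub>F r in at_top.
                      \<forall>x\<in>F - ball \<rho> r. \<forall>t\<in>{a..b}. q t x \<le> \<epsilon>)"
    and A3b_time: "\<forall>\<epsilon>>0. \<forall>\<^sub>F t in at_top. \<forall>\<^sub>F n in sequentially.
                      \<forall>x\<in>V n. \<beta> n * qdens (\<mu> n) (nat \<lfloor>\<gamma> n * t\<rfloor>) \<rho> x \<le> \<epsilon>"
    and A3b_space: "\<forall>a b. 0 < a \<longrightarrow> (\<forall>\<epsilon>>0. \<forall>\<^sub>F r in at_top. \<forall>\<^sub>F n in sequentially.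
                      \<forall>x\<in>V n - gball (V n) (\<mu> n) \<rho> (\<alpha> n * r). \<forall>t\<in>{a..b}.
                        \<beta> n * qdens (\<mu> n) (nat \<lfloor>\<gamma> n * t\<rfloor>) \<rho> x \<le> \<epsilon>)"
begin

abbreviation rescaled_density :: "nat \<Rightarrow> real \<Rightarrow> 'a \<Rightarrow> real" where
  "rescaled_density n t x \<equiv> \<beta> n * qdens (\<mu> n) (nat \<lfloor>\<gamma> n * t\<rfloor>) \<rho> x"

lemma eventually_graph: "\<forall>\<^sub>F n in sequentially. wgraph (V n) (\<mu> n) \<and> \<rho> \<in> V n"
  using eventually_ge_at_top[of 1] by eventually_elim (use graphs in auto)

lemma eventually_nearest_vertex:
  assumes "0 < \<epsilon>"
  shows "\<forall>\<^sub>F n in sequentially. \<forall>x\<in>F \<inter> cball \<rho> R. g n x \<in> V n \<and> dist x (g n x) \<le> \<epsilon>"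
proof -
  have "\<forall>\<^sub>F n in sequentially. \<forall>x\<in>F \<inter> ball \<rho> (max R 0 + 1). infdist x (V n) \<le> \<epsilon>"
    using A1b[rule_format, where r = "max R 0 + 1" and \<epsilon> = \<epsilon>] assms by (simp add: add_pos_nonneg)
  then show ?thesis
    using eventually_ge_at_top[of 1]
  proof eventually_elim
    case (elim n)
    show ?case
    proof
      fix x assume x: "x \<in> F \<inter> cball \<rho> R"
      have "dist x (g n x) \<le> infdist x (V n)"
        using g_min graphs elim(2) x by (intro dist_le_infdist_of_nearest) auto
      also have "\<dots> \<le> \<epsilon>" using elim(1) x by auto
      finally show "g n x \<in> V n \<and> dist x (g n x) \<le> \<epsilon>" using g_min elim(2) x by auto
    qed
  qed
qed

lemma time_tail:
  assumes "0 < \<epsilon>"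
  obtains T where "T1 \<le> T" "\<forall>t\<ge>T. \<forall>x\<in>F. q t x \<le> \<epsilon>"
    "\<forall>\<^sub>F n in sequentially. \<forall>v\<in>V n. \<forall>t\<ge>T. rescaled_density n t v \<le> \<epsilon>"
proof -
  obtain N where N: "\<And>t. N \<le> t \<Longrightarrow> (\<forall>x\<in>F. q t x \<le> \<epsilon>) \<and>
      (\<forall>\<^sub>F n in sequentially. \<forall>v\<in>V n. rescaled_density n t v \<le> \<epsilon>)"
    using eventually_conj[OF A3a_time[rule_format, OF assms] A3b_time[rule_format, OF assms]]
    unfolding eventually_at_top_linorder by blast
  define T where "T = max N T1"
  have "\<forall>\<^sub>F n in sequentially. \<forall>v\<in>V n. rescaled_density n T v \<le> \<epsilon>"
    using N[of T] by (simp add: T_def)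
  then have "\<forall>\<^sub>F n in sequentially. \<forall>v\<in>V n. \<forall>t\<ge>T. rescaled_density n t v \<le> \<epsilon>"
    using eventually_graph
  proof eventually_elim
    case (elim n)
    then show ?case
      using rescaled_qdens_bound_persists[of "V n" "\<mu> n" "\<beta> n" "\<gamma> n" T] seq_nonneg assms by auto
  qed
  moreover have "\<forall>t\<ge>T. \<forall>x\<in>F. q t x \<le> \<epsilon>" "T1 \<le> T" using N unfolding T_def by auto
  ultimately show ?thesis using that by blast
qed

text \<open>(A1b) controls the distance to V n only on bounded sets. The midpoint property yields a
  point z of F with R0/2 \<le> d(\<rho>, z) < R0 lying almost on a geodesic from \<rho> to x; a vertex near z
  is then nearly as close to x as x is to z, so the nearest vertex g n x stays far from \<rho>, and the
  lower bound of (A1a) converts this into a lower bound for the graph distance.\<close>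
lemma nearest_vertex_far_in_graph:
  obtains R0 where "R \<le> R0" "0 < R0" "\<forall>\<^sub>F n in sequentially. \<forall>x\<in>F. R0 \<le> dist \<rho> x \<longrightarrow>
      g n x \<in> V n - gball (V n) (\<mu> n) \<rho> (\<alpha> n * R)"
proof -
  obtain c1 where c1: "0 < c1" and lower: "\<forall>n\<ge>1. \<forall>x\<in>V n. \<forall>y\<in>V n.
      real (gdist (\<mu> n) x y) \<ge> c1 * \<alpha> n * dist x y"
    using A1a_lower by blast
  define a where "a = \<bar>R\<bar> / c1"
  define R0 where "R0 = max R (2 * a + 4)"
  have "R / c1 \<le> a" "0 \<le> a" using c1 unfolding a_def by (simp_all add: divide_right_mono)
  moreover have "R \<le> R0" "2 * a + 4 \<le> R0" unfolding R0_def by auto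
  ultimately have R0: "R \<le> R0" "0 < R0" "R / c1 \<le> R0 / 2 - 2" by linarith+
  have "\<forall>\<^sub>F n in sequentially. \<forall>x\<in>F. R0 \<le> dist \<rho> x \<longrightarrow> g n x \<in> V n - gball (V n) (\<mu> n) \<rho> (\<alpha> n * R)"
    using eventually_ge_at_top[of 1] A1b[rule_format, OF R0(2) zero_less_one]
  proof eventually_elim
    case (elim n)
    show ?case
    proof (intro ballI impI)
      fix x assume x: "x \<in> F" and xR: "R0 \<le> dist \<rho> x"
      have gx: "g n x \<in> V n" and rV: "\<rho> \<in> V n" using g_min graphs elim(1) x by auto
      obtain z where z: "z \<in> F" "R0 / 2 \<le> dist \<rho> z" "dist \<rho> z < R0"
          "dist z x \<le> dist \<rho> x - dist \<rho> z"
        using has_midpoints_point_below_radius[OF midpoint rho_F x R0(2) xR] by blast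
      have "dist x (g n x) \<le> infdist x (V n)"
        using g_min elim(1) x rV by (intro dist_le_infdist_of_nearest) auto
      also have "\<dots> \<le> infdist z (V n) + dist x z" by (rule infdist_triangle)
      also have "\<dots> \<le> 1 + (dist \<rho> x - dist \<rho> z)"
        using elim(2) z dist_commute[of x z] by (intro add_mono) auto
      finally have "R / c1 \<le> dist \<rho> (g n x)"
        using dist_triangle[of \<rho> x "g n x"] dist_commute[of x "g n x"] z(2) R0(3) by linarith
      have "\<alpha> n * R = c1 * \<alpha> n * (R / c1)" using c1 by simp
      also have "\<dots> \<le> c1 * \<alpha> n * dist \<rho> (g n x)"
        using \<open>R / c1 \<le> dist \<rho> (g n x)\<close> c1 seq_nonneg by (intro mult_left_mono) auto
      also have "\<dots> \<le> real (gdist (\<mu> n) \<rho> (g n x))" using lower elim(1) rV gx by auto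
      finally show "g n x \<in> V n - gball (V n) (\<mu> n) \<rho> (\<alpha> n * R)"
        using gx unfolding gball_def by auto
    qed
  qed
  then show ?thesis using R0 that by blast
qed

lemma space_tail:
  assumes "0 < \<epsilon>"
  obtains R0 where "0 < R0" "\<forall>x\<in>F. R0 \<le> dist \<rho> x \<longrightarrow> (\<forall>t\<in>{T1..T}. q t x \<le> \<epsilon>)"
    "\<forall>\<^sub>F n in sequentially. \<forall>x\<in>F. R0 \<le> dist \<rho> x \<longrightarrow> (\<forall>t\<in>{T1..T}. rescaled_density n t (g n x) \<le> \<epsilon>)"
proof -
  obtain R where R: "\<forall>x\<in>F - ball \<rho> R. \<forall>t\<in>{T1..T}. q t x \<le> \<epsilon>"
    and ev: "\<forall>\<^sub>F n in sequentially. \<forall>v\<in>V n - gball (V n) (\<mu> n) \<rho> (\<alpha> n * R).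
      \<forall>t\<in>{T1..T}. rescaled_density n t v \<le> \<epsilon>"
  proof -
    have "\<forall>\<^sub>F R in at_top. (\<forall>x\<in>F - ball \<rho> R. \<forall>t\<in>{T1..T}. q t x \<le> \<epsilon>) \<and>
        (\<forall>\<^sub>F n in sequentially. \<forall>v\<in>V n - gball (V n) (\<mu> n) \<rho> (\<alpha> n * R).
          \<forall>t\<in>{T1..T}. rescaled_density n t v \<le> \<epsilon>)"
      using A3a_space A3b_space T1_pos assms by (intro eventually_conj) simp_all
    then show thesis
      using that by (auto dest: eventually_happens'[OF trivial_limit_at_top_linorder])
  qed
  obtain R0 where "R \<le> R0" "0 < R0" and far: "\<forall>\<^sub>F n in sequentially. \<forall>x\<in>F. R0 \<le> dist \<rho> x \<longrightarrow>
      g n x \<in> V n - gball (V n) (\<mu> n) \<rho> (\<alpha> n * R)"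
    by (rule nearest_vertex_far_in_graph)
  have "\<forall>\<^sub>F n in sequentially. \<forall>x\<in>F. R0 \<le> dist \<rho> x \<longrightarrow> (\<forall>t\<in>{T1..T}. rescaled_density n t (g n x) \<le> \<epsilon>)"
    using ev far by eventually_elim blast
  moreover have "\<forall>x\<in>F. R0 \<le> dist \<rho> x \<longrightarrow> (\<forall>t\<in>{T1..T}. q t x \<le> \<epsilon>)"
    using R \<open>R \<le> R0\<close> by auto
  ultimately show ?thesis using \<open>0 < R0\<close> that by blast
qed

lemma graph_dist_upper:
  assumes "0 < R"
  obtains C where "0 < C" "\<And>\<eta>. 0 < \<eta> \<Longrightarrow> \<forall>\<^sub>F n in sequentially. 0 < \<alpha> n \<and>
      (\<forall>x\<in>V n \<inter> ball \<rho> R. \<forall>y\<in>V n \<inter> ball \<rho> R. real (gdist (\<mu> n) x y) \<le> \<alpha> n * (C * dist x y + \<eta>))"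
proof -
  obtain \<alpha>' :: "nat \<Rightarrow> real" where \<alpha>'_nonneg: "\<forall>n. 0 \<le> \<alpha>' n" and "\<alpha>' \<in> o(\<alpha>)"
    and upper: "\<forall>r>0. \<exists>c2 n0. \<forall>n\<ge>n0. \<forall>x\<in>V n \<inter> ball \<rho> r. \<forall>y\<in>V n \<inter> ball \<rho> r.
                  real (gdist (\<mu> n) x y) \<le> c2 * \<alpha> n * dist x y + \<alpha>' n"
    using A1a_upper by blast
  obtain c2 n0 where c2: "\<forall>n\<ge>n0. \<forall>x\<in>V n \<inter> ball \<rho> R. \<forall>y\<in>V n \<inter> ball \<rho> R.
      real (gdist (\<mu> n) x y) \<le> c2 * \<alpha> n * dist x y + \<alpha>' n"
    using upper assms by blast
  show ?thesis
  proof (rule that[of "\<bar>c2\<bar> + 1"])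
    fix \<eta> :: real assume "0 < \<eta>"
    have "\<forall>\<^sub>F n in sequentially. \<alpha>' n \<le> \<eta> * \<bar>\<alpha> n\<bar>"
      using landau_o.smallD_nonneg_real[OF \<open>\<alpha>' \<in> o(\<alpha>)\<close> _ \<open>0 < \<eta>\<close>] \<alpha>'_nonneg by auto
    moreover have "\<forall>\<^sub>F n in sequentially. 0 < \<alpha> n"
      using alpha_lim unfolding filterlim_at_top_dense by blast
    ultimately show "\<forall>\<^sub>F n in sequentially. 0 < \<alpha> n \<and> (\<forall>x\<in>V n \<inter> ball \<rho> R. \<forall>y\<in>V n \<inter> ball \<rho> R.
        real (gdist (\<mu> n) x y) \<le> \<alpha> n * ((\<bar>c2\<bar> + 1) * dist x y + \<eta>))"
      using eventually_ge_at_top[of n0]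
    proof eventually_elim
      case (elim n)
      show ?case
      proof (intro conjI ballI)
        fix x y assume "x \<in> V n \<inter> ball \<rho> R" "y \<in> V n \<inter> ball \<rho> R"
        then have "real (gdist (\<mu> n) x y) \<le> c2 * \<alpha> n * dist x y + \<alpha>' n" using c2 elim(3) by blast
        also have "\<dots> \<le> (\<bar>c2\<bar> + 1) * \<alpha> n * dist x y + \<eta> * \<alpha> n"
          using elim by (intro add_mono mult_right_mono) auto
        finally show "real (gdist (\<mu> n) x y) \<le> \<alpha> n * ((\<bar>c2\<bar> + 1) * dist x y + \<eta>)"
          by (simp add: algebra_simps)
      qed (fact elim(2))
    qed
  qed simp
qed

lemma metric_ball_in_graph_ball:
  assumes "0 < R"
  obtains R1 where "0 < R1"
    "\<forall>\<^sub>F n in sequentially. V n \<inter> ball \<rho> R \<subseteq> gball (V n) (\<mu> n) \<rho> (\<alpha> n * R1)"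
proof -
  obtain C where C: "0 < C" and dist_upper: "\<forall>\<^sub>F n in sequentially. 0 < \<alpha> n \<and>
      (\<forall>x\<in>V n \<inter> ball \<rho> R. \<forall>y\<in>V n \<inter> ball \<rho> R. real (gdist (\<mu> n) x y) \<le> \<alpha> n * (C * dist x y + 1))"
    using graph_dist_upper[OF assms] zero_less_one by blast
  have "\<forall>\<^sub>F n in sequentially. V n \<inter> ball \<rho> R \<subseteq> gball (V n) (\<mu> n) \<rho> (\<alpha> n * (C * R + 1))"
    using dist_upper eventually_graph
  proof eventually_elim
    case (elim n)
    show ?case
    proof
      fix z assume z: "z \<in> V n \<inter> ball \<rho> R"
      have "\<rho> \<in> V n \<inter> ball \<rho> R" using elim(2) assms by simp
      then have "real (gdist (\<mu> n) \<rho> z) \<le> \<alpha> n * (C * dist \<rho> z + 1)" using elim(1) z by blast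
      also have "\<dots> < \<alpha> n * (C * R + 1)" using elim(1) z C by simp
      finally show "z \<in> gball (V n) (\<mu> n) \<rho> (\<alpha> n * (C * R + 1))" using z unfolding gball_def by simp
    qed
  qed
  moreover have "0 < C * R + 1" using C assms by (simp add: add_pos_pos)
  ultimately show ?thesis using that by blast
qed

text \<open>(A2) is stated in the graph metric; the upper bound of (A1a) transports it to the metric of E.\<close>
lemma equicontinuity:
  assumes "0 < \<kappa>" "0 < r0" "0 \<le> R"
  obtains r where "0 < r" "r \<le> r0" "\<forall>\<^sub>F n in sequentially. \<forall>x\<in>F \<inter> cball \<rho> R. \<forall>y\<in>V n.
      dist x y < 2 * r \<longrightarrow> (\<forall>t\<in>{T1..T}. \<beta> n * \<bar>qdens (\<mu> n) (nat \<lfloor>\<gamma> n * t\<rfloor>) \<rho> (g n x)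
                                                - qdens (\<mu> n) (nat \<lfloor>\<gamma> n * t\<rfloor>) \<rho> y\<bar> \<le> \<kappa>)"
proof -
  obtain C where C: "0 < C" and dist_upper: "\<And>\<eta>. 0 < \<eta> \<Longrightarrow> \<forall>\<^sub>F n in sequentially. 0 < \<alpha> n \<and>
      (\<forall>x\<in>V n \<inter> ball \<rho> (R + 2). \<forall>y\<in>V n \<inter> ball \<rho> (R + 2).
         real (gdist (\<mu> n) x y) \<le> \<alpha> n * (C * dist x y + \<eta>))"
    using graph_dist_upper[of "R + 2"] assms by auto
  obtain R1 where "0 < R1" and in_gball: "\<forall>\<^sub>F n in sequentially.
      V n \<inter> ball \<rho> (R + 2) \<subseteq> gball (V n) (\<mu> n) \<rho> (\<alpha> n * R1)"
    using metric_ball_in_graph_ball[of "R + 2"] assms by auto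
  obtain \<delta> where "0 < \<delta>" and A2_\<delta>: "\<forall>\<^sub>F n in sequentially.
      \<forall>x\<in>gball (V n) (\<mu> n) \<rho> (\<alpha> n * R1). \<forall>y\<in>gball (V n) (\<mu> n) \<rho> (\<alpha> n * R1).
        real (gdist (\<mu> n) x y) \<le> \<alpha> n * \<delta> \<longrightarrow>
        (\<forall>t\<in>{T1..T}. \<beta> n * \<bar>qdens (\<mu> n) (nat \<lfloor>\<gamma> n * t\<rfloor>) \<rho> x - qdens (\<mu> n) (nat \<lfloor>\<gamma> n * t\<rfloor>) \<rho> y\<bar> \<le> \<kappa>)"
    using A2[rule_format, where a = T1 and b = T and r = R1 and \<epsilon> = \<kappa>] T1_pos \<open>0 < R1\<close> assms(1)
    by blast
  define r where "r = min r0 (min (1 / 2) (\<delta> / (6 * C)))"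
  have r: "0 < r" "r \<le> r0" "r \<le> 1 / 2" "r \<le> \<delta> / (6 * C)"
    using assms \<open>0 < \<delta>\<close> C unfolding r_def by simp_all
  have "C * (3 * r) \<le> \<delta> / 2" using r(4) C by (simp add: le_divide_eq algebra_simps)
  have "0 < \<delta> / 2" "0 < r / 4" using \<open>0 < \<delta>\<close> r(1) by simp_all
  have "\<forall>\<^sub>F n in sequentially. \<forall>x\<in>F \<inter> cball \<rho> R. \<forall>y\<in>V n. dist x y < 2 * r \<longrightarrow>
      (\<forall>t\<in>{T1..T}. \<beta> n * \<bar>qdens (\<mu> n) (nat \<lfloor>\<gamma> n * t\<rfloor>) \<rho> (g n x) - qdens (\<mu> n) (nat \<lfloor>\<gamma> n * t\<rfloor>) \<rho> y\<bar> \<le> \<kappa>)"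
    using dist_upper[OF \<open>0 < \<delta> / 2\<close>] eventually_nearest_vertex[OF \<open>0 < r / 4\<close>, of R] A2_\<delta> in_gball
  proof eventually_elim
    case (elim n)
    show ?case
    proof (intro ballI impI)
      fix x y t assume x: "x \<in> F \<inter> cball \<rho> R" and y: "y \<in> V n" and xy: "dist x y < 2 * r"
        and t: "t \<in> {T1..T}"
      have gx: "g n x \<in> V n" "dist x (g n x) \<le> r / 4" using elim(2) x by auto
      have "dist (g n x) y \<le> 3 * r"
        using dist_triangle[of "g n x" y x] gx(2) xy r(1) by (simp add: dist_commute)
      have near: "g n x \<in> V n \<inter> ball \<rho> (R + 2)" "y \<in> V n \<inter> ball \<rho> (R + 2)"
        using gx y x xy r dist_triangle[of \<rho> "g n x" x] dist_triangle[of \<rho> y x]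
        by (auto simp: dist_commute)
      have "real (gdist (\<mu> n) (g n x) y) \<le> \<alpha> n * (C * dist (g n x) y + \<delta> / 2)"
        using elim(1) near by blast
      also have "\<dots> \<le> \<alpha> n * \<delta>"
      proof -
        have "C * dist (g n x) y \<le> C * (3 * r)"
          using \<open>dist (g n x) y \<le> 3 * r\<close> C by (intro mult_left_mono) auto
        then show ?thesis using \<open>C * (3 * r) \<le> \<delta> / 2\<close> elim(1) by (intro mult_left_mono) auto
      qed
      finally show "\<beta> n * \<bar>qdens (\<mu> n) (nat \<lfloor>\<gamma> n * t\<rfloor>) \<rho> (g n x)
          - qdens (\<mu> n) (nat \<lfloor>\<gamma> n * t\<rfloor>) \<rho> y\<bar> \<le> \<kappa>"
        using elim(3,4) near t by blast
    qed
  qed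
  then show ?thesis using that r by blast
qed

lemma q_continuous_on_window:
  assumes "0 < R"
  shows "compact ({T1..T} \<times> (F \<inter> cball \<rho> R))"
    and "continuous_on ({T1..T} \<times> (F \<inter> cball \<rho> R)) (\<lambda>(t, x). q t x)"
proof -
  show "compact ({T1..T} \<times> (F \<inter> cball \<rho> R))"
    using F_compact assms by (intro compact_Times) auto
  show "continuous_on ({T1..T} \<times> (F \<inter> cball \<rho> R)) (\<lambda>(t, x). q t x)"
    using T1_pos by (intro continuous_on_subset[OF q_cont]) auto
qed

lemma q_bounded_on_window:
  assumes "0 < R"
  obtains C where "0 \<le> C" "\<forall>t\<in>{T1..T}. \<forall>x\<in>F \<inter> cball \<rho> R. \<bar>q t x\<bar> \<le> C"
proof -
  have "bounded ((\<lambda>(t, x). q t x) ` ({T1..T} \<times> (F \<inter> cball \<rho> R)))"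
    using q_continuous_on_window[OF assms] by (intro compact_imp_bounded compact_continuous_image)
  then obtain C where "\<forall>t\<in>{T1..T}. \<forall>x\<in>F \<inter> cball \<rho> R. \<bar>q t x\<bar> \<le> C"
    unfolding bounded_iff by fastforce
  then show ?thesis by (intro that[of "max C 0"]) (auto intro: max.coboundedI1)
qed

lemma q_uniformly_continuous_on_window:
  assumes "0 < R" "0 < \<epsilon>"
  obtains d where "0 < d" "\<forall>s\<in>{T1..T}. \<forall>t\<in>{T1..T}. \<forall>x\<in>F \<inter> cball \<rho> R. \<forall>y\<in>F \<inter> cball \<rho> R.
      \<bar>s - t\<bar> < d \<longrightarrow> dist y x < d \<longrightarrow> \<bar>q s y - q t x\<bar> < \<epsilon>"
proof -
  obtain d where "0 < d" and d: "\<forall>p\<in>{T1..T} \<times> (F \<inter> cball \<rho> R). \<forall>p'\<in>{T1..T} \<times> (F \<inter> cball \<rho> R).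
      dist p' p < d \<longrightarrow> dist ((\<lambda>(t, x). q t x) p') ((\<lambda>(t, x). q t x) p) < \<epsilon>"
    using compact_uniformly_continuous[OF q_continuous_on_window(2,1)[OF assms(1)]] assms(2)
    unfolding uniformly_continuous_on_def by metis
  have "dist (s, y) (t, x) < d" if "\<bar>s - t\<bar> < d / 2" "dist y x < d / 2" for s t :: real and x y
  proof -
    have "dist (s, y) (t, x) \<le> dist s t + dist y x"
      unfolding dist_Pair_Pair by (rule sqrt_sum_squares_le_sum) auto
    then show ?thesis using that by (simp add: dist_real_def)
  qed
  with d have "\<forall>s\<in>{T1..T}. \<forall>t\<in>{T1..T}. \<forall>x\<in>F \<inter> cball \<rho> R. \<forall>y\<in>F \<inter> cball \<rho> R.
      \<bar>s - t\<bar> < d / 2 \<longrightarrow> dist y x < d / 2 \<longrightarrow> \<bar>q s y - q t x\<bar> < \<epsilon>"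
    by (fastforce simp: dist_real_def)
  then show ?thesis using that \<open>0 < d\<close> by (meson half_gt_zero)
qed

lemma ball_measure:
  assumes "c \<in> F" "0 < r"
  shows "F \<inter> ball c r \<in> sets \<nu>"
    and "emeasure \<nu> (F \<inter> ball c r) = ennreal (measure \<nu> (F \<inter> ball c r))"
    and "0 < measure \<nu> (F \<inter> ball c r)"
proof -
  show sets: "F \<inter> ball c r \<in> sets \<nu>" unfolding nu_sets sets_restrict_space by auto
  have "emeasure \<nu> (F \<inter> ball c r) \<le> emeasure \<nu> (F \<inter> cball c r)"
    using sets by (intro emeasure_mono) (auto simp: nu_sets sets_restrict_space)
  also have "\<dots> < \<infinity>" using nu_radon by blast
  finally show eq: "emeasure \<nu> (F \<inter> ball c r) = ennreal (measure \<nu> (F \<inter> ball c r))"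
    by (intro emeasure_eq_ennreal_measure) simp
  show "0 < measure \<nu> (F \<inter> ball c r)" using nu_supp assms eq by fastforce
qed

lemma rescaled_ball_mass_converges:
  assumes "c \<in> F" "0 < r"
  shows "\<forall>\<^sub>F n in sequentially. gmeas (V n) (\<mu> n) (ball c r) \<noteq> \<top>"
    and "(\<lambda>n. enn2real (gmeas (V n) (\<mu> n) (ball c r)) / \<beta> n) \<longlonglongrightarrow> measure \<nu> (F \<inter> ball c r)"
proof -
  define f where "f n = ennreal (1 / \<beta> n) * gmeas (V n) (\<mu> n) (ball c r)" for n
  have lim: "f \<longlonglongrightarrow> ennreal (measure \<nu> (F \<inter> ball c r))"
    unfolding f_def ball_measure(2)[OF assms, symmetric] using A1c assms by blast
  have \<beta>: "\<forall>\<^sub>F n in sequentially. 0 < \<beta> n"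
    using beta_lim unfolding filterlim_at_top_dense by blast
  show "\<forall>\<^sub>F n in sequentially. gmeas (V n) (\<mu> n) (ball c r) \<noteq> \<top>"
    using order_tendstoD(2)[OF lim, of \<top>, OF ennreal_less_top] \<beta>
    by eventually_elim (auto simp: f_def ennreal_mult_top)
  have "(\<lambda>n. enn2real (f n)) \<longlonglongrightarrow> measure \<nu> (F \<inter> ball c r)"
    using tendsto_enn2real[OF lim] by simp
  moreover have "\<forall>\<^sub>F n in sequentially. enn2real (f n) = enn2real (gmeas (V n) (\<mu> n) (ball c r)) / \<beta> n"
    using \<beta> by eventually_elim (simp add: f_def enn2real_mult)
  ultimately show "(\<lambda>n. enn2real (gmeas (V n) (\<mu> n) (ball c r)) / \<beta> n) \<longlonglongrightarrow> measure \<nu> (F \<inter> ball c r)"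
    by (rule Lim_transform_eventually)
qed

text \<open>The walk is sampled at the two consecutive steps nat \<lfloor>\<gamma> n t\<rfloor> and its successor; the second
  is the step at time t + 1 / \<gamma> n, which differs from t by less than h for large n.\<close>
lemma hit_average_near_q:
  assumes c: "c \<in> F" "0 < r" and "0 < h" "0 < \<eta>"
    and osc: "\<forall>x\<in>X. \<forall>s\<in>{T1..T+1}. \<forall>t\<in>{T1..T}. \<bar>s - t\<bar> < h \<longrightarrow>
                (\<forall>y\<in>F \<inter> ball c r. \<bar>q s y - q t x\<bar> \<le> \<kappa>)"
  shows "\<forall>\<^sub>F n in sequentially. \<forall>x\<in>X. \<forall>t\<in>{T1..T}.
    \<bar>(hitprob (\<mu> n) (nat \<lfloor>\<gamma> n * t\<rfloor>) \<rho> (ball c r) + hitprob (\<mu> n) (Suc (nat \<lfloor>\<gamma> n * t\<rfloor>)) \<rho> (ball c r)) / 2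
       - q t x * measure \<nu> (F \<inter> ball c r)\<bar> \<le> \<eta> + \<kappa> * measure \<nu> (F \<inter> ball c r)"
proof -
  let ?A = "F \<inter> ball c r"
  have integral_near: "\<bar>set_lebesgue_integral \<nu> ?A (q s) - q t x * measure \<nu> ?A\<bar> \<le> \<kappa> * measure \<nu> ?A"
    if "x \<in> X" "s \<in> {T1..T+1}" "t \<in> {T1..T}" "\<bar>s - t\<bar> < h" for x s t
    using osc that ball_measure[OF c] q_integrable T1_pos by (intro set_integral_approx) auto
  have hit: "\<forall>\<^sub>F n in sequentially. \<forall>s\<in>{T1..T+1}.
      \<bar>hitprob (\<mu> n) (nat \<lfloor>\<gamma> n * s\<rfloor>) \<rho> (ball c r) - set_lebesgue_integral \<nu> ?A (q s)\<bar> < \<eta>"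
    using A1d[rule_format, OF T1_pos c, of "T + 1"] \<open>0 < \<eta>\<close>
    unfolding uniform_limit_iff dist_real_def by blast
  have "\<forall>\<^sub>F n in sequentially. max 1 (1 / h) < \<gamma> n"
    using gamma_lim unfolding filterlim_at_top_dense by blast
  with hit show ?thesis
  proof eventually_elim
    case (elim n)
    then have \<gamma>: "0 < \<gamma> n" "1 / \<gamma> n \<le> 1" "1 / \<gamma> n < h"
      using \<open>0 < h\<close> by (auto simp: field_simps)
    show ?case
    proof (intro ballI)
      fix x t assume x: "x \<in> X" and t: "t \<in> {T1..T}"
      have "0 < 1 / \<gamma> n" using \<gamma>(1) by simp
      then have s: "t + 1 / \<gamma> n \<in> {T1..T+1}" "\<bar>t + 1 / \<gamma> n - t\<bar> < h"
        using t \<gamma>(2,3) unfolding atLeastAtMost_iff by linarith+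
      have "nat \<lfloor>\<gamma> n * (t + 1 / \<gamma> n)\<rfloor> = Suc (nat \<lfloor>\<gamma> n * t\<rfloor>)"
        using \<gamma>(1) t T1_pos by (intro nat_floor_shift) auto
      moreover have "t \<in> {T1..T+1}" using t by simp
      ultimately show "\<bar>(hitprob (\<mu> n) (nat \<lfloor>\<gamma> n * t\<rfloor>) \<rho> (ball c r)
            + hitprob (\<mu> n) (Suc (nat \<lfloor>\<gamma> n * t\<rfloor>)) \<rho> (ball c r)) / 2 - q t x * measure \<nu> ?A\<bar>
          \<le> \<eta> + \<kappa> * measure \<nu> ?A"
        using abs_average_le[OF _ _ integral_near[OF x _ t] integral_near[OF x s(1) t s(2)]] elim(1) s(1)
          \<open>0 < h\<close> by (metis diff_self abs_zero)
    qed
  qed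
qed

lemma local_estimate_on_ball:
  assumes c: "c \<in> F" "0 < r" and "0 < \<epsilon>" "0 < h" "0 \<le> Cq"
    and bound: "\<forall>x\<in>X. \<forall>t\<in>{T1..T}. \<bar>q t x\<bar> \<le> Cq"
    and osc: "\<forall>x\<in>X. \<forall>s\<in>{T1..T+1}. \<forall>t\<in>{T1..T}. \<bar>s - t\<bar> < h \<longrightarrow>
                (\<forall>y\<in>F \<inter> ball c r. \<bar>q s y - q t x\<bar> \<le> \<epsilon> / 16)"
    and equi: "\<forall>\<^sub>F n in sequentially. \<forall>x\<in>X. \<forall>y\<in>V n \<inter> ball c r. \<forall>t\<in>{T1..T}.
                \<beta> n * \<bar>qdens (\<mu> n) (nat \<lfloor>\<gamma> n * t\<rfloor>) \<rho> (g n x) - qdens (\<mu> n) (nat \<lfloor>\<gamma> n * t\<rfloor>) \<rho> y\<bar>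
                  \<le> \<epsilon> / 16"
  shows "\<forall>\<^sub>F n in sequentially. \<forall>x\<in>X. \<forall>t\<in>{T1..T}. \<bar>rescaled_density n t (g n x) - q t x\<bar> < \<epsilon>"
proof -
  define v where "v = measure \<nu> (F \<inter> ball c r)"
  have "0 < v" unfolding v_def by (rule ball_measure(3)[OF c])
  define \<theta> where "\<theta> = min (v / 2) (\<epsilon> * v / (16 * (Cq + 1)))"
  have \<theta>: "0 < \<theta>" "\<theta> \<le> v / 2" "Cq * \<theta> \<le> \<epsilon> / 16 * v"
  proof -
    have "Cq * \<theta> \<le> (Cq + 1) * (\<epsilon> * v / (16 * (Cq + 1)))"
      unfolding \<theta>_def using \<open>0 < v\<close> \<open>0 < \<epsilon>\<close> \<open>0 \<le> Cq\<close> by (intro mult_mono) auto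
    also have "\<dots> = \<epsilon> / 16 * v" using \<open>0 \<le> Cq\<close> by (simp add: field_simps)
    finally show "Cq * \<theta> \<le> \<epsilon> / 16 * v" .
    show "\<theta> \<le> v / 2" unfolding \<theta>_def by (rule min.cobounded1)
  qed (use \<open>0 < v\<close> \<open>0 < \<epsilon>\<close> \<open>0 \<le> Cq\<close> in \<open>simp add: \<theta>_def\<close>)
  define m where "m n = enn2real (gmeas (V n) (\<mu> n) (ball c r)) / \<beta> n" for n
  have mass: "\<forall>\<^sub>F n in sequentially. \<bar>m n - v\<bar> < \<theta>"
    using rescaled_ball_mass_converges(2)[OF c] \<theta>(1)
    unfolding tendsto_iff dist_real_def m_def v_def by blast
  have "0 < \<epsilon> * v / 16" using \<open>0 < \<epsilon>\<close> \<open>0 < v\<close> by simp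
  note hit = hit_average_near_q[OF c \<open>0 < h\<close> this osc, folded v_def]
  have "\<forall>\<^sub>F n in sequentially. 0 < \<beta> n"
    using beta_lim unfolding filterlim_at_top_dense by blast
  then show ?thesis
    using eventually_graph rescaled_ball_mass_converges(1)[OF c] mass equi hit
  proof eventually_elim
    case (elim n)
    show ?case
    proof (intro ballI)
      fix x t assume x: "x \<in> X" and t: "t \<in> {T1..T}"
      let ?hit = "\<lambda>k. hitprob (\<mu> n) k \<rho> (ball c r)"
      let ?k = "nat \<lfloor>\<gamma> n * t\<rfloor>"
      have "\<bar>(?hit ?k + ?hit (Suc ?k)) / 2 - rescaled_density n t (g n x) * m n\<bar> \<le> \<epsilon> / 16 * m n"
        unfolding m_def using elim x t \<open>0 < \<epsilon>\<close>
        by (intro hitprob_average_rescaled_approx) (auto simp: abs_minus_commute)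
      moreover have "\<bar>(?hit ?k + ?hit (Suc ?k)) / 2 - q t x * v\<bar> \<le> \<epsilon> / 8 * v"
      proof -
        have "\<bar>(?hit ?k + ?hit (Suc ?k)) / 2 - q t x * v\<bar> \<le> \<epsilon> * v / 16 + \<epsilon> / 16 * v"
          using elim(6) x t by blast
        then show ?thesis by simp
      qed
      moreover have "\<bar>q t x\<bar> * \<bar>m n - v\<bar> \<le> \<epsilon> / 16 * v"
        using mult_mono[of "\<bar>q t x\<bar>" Cq "\<bar>m n - v\<bar>" \<theta>] bound x t elim(4) \<theta>(3) \<open>0 \<le> Cq\<close> by auto
      ultimately show "\<bar>rescaled_density n t (g n x) - q t x\<bar> < \<epsilon>"
        by (rule approx_quotient) (use elim(4) \<theta>(2) \<open>0 < v\<close> \<open>0 < \<epsilon>\<close> in auto)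
    qed
  qed
qed

lemma local_estimate_on_small_balls:
  assumes "0 < R" "0 < \<epsilon>"
  obtains r where "0 < r" "\<forall>c\<in>F. \<forall>\<^sub>F n in sequentially. \<forall>x\<in>F \<inter> cball \<rho> R \<inter> ball c (r / 2).
      \<forall>t\<in>{T1..T}. \<bar>rescaled_density n t (g n x) - q t x\<bar> < \<epsilon>"
proof -
  let ?K = "F \<inter> cball \<rho> R"
  obtain Cq where Cq: "0 \<le> Cq" "\<forall>t\<in>{T1..T}. \<forall>x\<in>?K. \<bar>q t x\<bar> \<le> Cq"
    using q_bounded_on_window[OF assms(1)] .
  obtain d where "0 < d" and uc: "\<forall>s\<in>{T1..T+1}. \<forall>t\<in>{T1..T+1}. \<forall>x\<in>F \<inter> cball \<rho> (R + 1).
      \<forall>y\<in>F \<inter> cball \<rho> (R + 1). \<bar>s - t\<bar> < d \<longrightarrow> dist y x < d \<longrightarrow> \<bar>q s y - q t x\<bar> < \<epsilon> / 16"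
    using q_uniformly_continuous_on_window[of "R + 1" "\<epsilon> / 16" "T + 1"] assms by auto
  obtain r where r: "0 < r" "r \<le> min (d / 2) (1 / 2)" and equi: "\<forall>\<^sub>F n in sequentially. \<forall>x\<in>?K.
      \<forall>y\<in>V n. dist x y < 2 * r \<longrightarrow> (\<forall>t\<in>{T1..T}. \<beta> n * \<bar>qdens (\<mu> n) (nat \<lfloor>\<gamma> n * t\<rfloor>) \<rho> (g n x)
                                                - qdens (\<mu> n) (nat \<lfloor>\<gamma> n * t\<rfloor>) \<rho> y\<bar> \<le> \<epsilon> / 16)"
    using equicontinuity[of "\<epsilon> / 16" "min (d / 2) (1 / 2)" R T] assms \<open>0 < d\<close> by auto
  have near: "dist x y < 2 * r \<and> dist \<rho> y \<le> R + 1"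
    if "x \<in> ?K \<inter> ball c (r / 2)" "y \<in> ball c r" for c x y
  proof -
    have "dist x y < 3 / 2 * r" using that dist_triangle[of x y c] by (simp add: dist_commute)
    moreover have "dist \<rho> x \<le> R" using that by simp
    ultimately show ?thesis using dist_triangle[of \<rho> y x] r by auto
  qed
  have "\<forall>\<^sub>F n in sequentially. \<forall>x\<in>?K \<inter> ball c (r / 2). \<forall>t\<in>{T1..T}.
      \<bar>rescaled_density n t (g n x) - q t x\<bar> < \<epsilon>" if "c \<in> F" for c
  proof (rule local_estimate_on_ball[OF \<open>c \<in> F\<close> r(1) assms(2) \<open>0 < d\<close> Cq(1)])
    show "\<forall>x\<in>?K \<inter> ball c (r / 2). \<forall>t\<in>{T1..T}. \<bar>q t x\<bar> \<le> Cq" using Cq(2) by blast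
    show "\<forall>x\<in>?K \<inter> ball c (r / 2). \<forall>s\<in>{T1..T+1}. \<forall>t\<in>{T1..T}. \<bar>s - t\<bar> < d \<longrightarrow>
        (\<forall>y\<in>F \<inter> ball c r. \<bar>q s y - q t x\<bar> \<le> \<epsilon> / 16)"
    proof (intro ballI impI)
      fix x s t y assume x: "x \<in> ?K \<inter> ball c (r / 2)" and s: "s \<in> {T1..T+1}" and t: "t \<in> {T1..T}"
        and st: "\<bar>s - t\<bar> < d" and y: "y \<in> F \<inter> ball c r"
      have "x \<in> F \<inter> cball \<rho> (R + 1)" "y \<in> F \<inter> cball \<rho> (R + 1)" "dist y x < d" "t \<in> {T1..T+1}"
        using x y t near[OF x, of y] r by (auto simp: dist_commute)
      then show "\<bar>q s y - q t x\<bar> \<le> \<epsilon> / 16" using uc s st by (meson less_imp_le)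
    qed
    show "\<forall>\<^sub>F n in sequentially. \<forall>x\<in>?K \<inter> ball c (r / 2). \<forall>y\<in>V n \<inter> ball c r. \<forall>t\<in>{T1..T}.
        \<beta> n * \<bar>qdens (\<mu> n) (nat \<lfloor>\<gamma> n * t\<rfloor>) \<rho> (g n x) - qdens (\<mu> n) (nat \<lfloor>\<gamma> n * t\<rfloor>) \<rho> y\<bar> \<le> \<epsilon> / 16"
      using equi by eventually_elim (use near in \<open>blast dest: bspec\<close>)
  qed
  then show ?thesis using that r(1) by blast
qed

lemma local_uniform_estimate:
  assumes "0 < R" "0 < \<epsilon>"
  shows "\<forall>\<^sub>F n in sequentially. \<forall>x\<in>F \<inter> cball \<rho> R. \<forall>t\<in>{T1..T}. \<bar>rescaled_density n t (g n x) - q t x\<bar> < \<epsilon>"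
proof -
  let ?K = "F \<inter> cball \<rho> R"
  obtain r where "0 < r" and small_balls: "\<forall>c\<in>F. \<forall>\<^sub>F n in sequentially. \<forall>x\<in>?K \<inter> ball c (r / 2).
      \<forall>t\<in>{T1..T}. \<bar>rescaled_density n t (g n x) - q t x\<bar> < \<epsilon>"
    using local_estimate_on_small_balls[OF assms] .
  have "compact ?K" using F_compact assms(1) by auto
  then obtain C where C: "C \<subseteq> ?K" "finite C" "?K \<subseteq> (\<Union>c\<in>C. ball c (r / 2))"
  proof (rule compactE_image[of ?K ?K "\<lambda>c. ball c (r / 2)"])
    show "?K \<subseteq> (\<Union>c\<in>?K. ball c (r / 2))" using \<open>0 < r\<close> by force
  qed auto
  have "\<forall>\<^sub>F n in sequentially. \<forall>c\<in>C. \<forall>x\<in>?K \<inter> ball c (r / 2). \<forall>t\<in>{T1..T}.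
      \<bar>rescaled_density n t (g n x) - q t x\<bar> < \<epsilon>"
    using small_balls C(1) by (intro eventually_ball_finite[OF C(2)]) blast
  then show ?thesis by eventually_elim (use C(3) in blast)
qed

theorem uniform_convergence:
  "uniform_limit (F \<times> {T1..}) (\<lambda>n (x, t). rescaled_density n t (g n x)) (\<lambda>(x, t). q t x) sequentially"
  unfolding uniform_limit_iff
proof (intro allI impI)
  fix \<epsilon> :: real assume "0 < \<epsilon>"
  then have "0 < \<epsilon> / 2" by simp
  obtain T where "T1 \<le> T" and q_T: "\<forall>t\<ge>T. \<forall>x\<in>F. q t x \<le> \<epsilon> / 2"
    and qn_T: "\<forall>\<^sub>F n in sequentially. \<forall>v\<in>V n. \<forall>t\<ge>T. rescaled_density n t v \<le> \<epsilon> / 2"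
    using time_tail[OF \<open>0 < \<epsilon> / 2\<close>] .
  obtain R where "0 < R" and q_R: "\<forall>x\<in>F. R \<le> dist \<rho> x \<longrightarrow> (\<forall>t\<in>{T1..T}. q t x \<le> \<epsilon> / 2)"
    and qn_R: "\<forall>\<^sub>F n in sequentially. \<forall>x\<in>F. R \<le> dist \<rho> x \<longrightarrow> (\<forall>t\<in>{T1..T}. rescaled_density n t (g n x) \<le> \<epsilon> / 2)"
    using space_tail[OF \<open>0 < \<epsilon> / 2\<close>] .
  show "\<forall>\<^sub>F n in sequentially. \<forall>p\<in>F \<times> {T1..}.
      dist ((\<lambda>(x, t). rescaled_density n t (g n x)) p) ((\<lambda>(x, t). q t x) p) < \<epsilon>"
    using qn_T qn_R local_uniform_estimate[OF \<open>0 < R\<close> \<open>0 < \<epsilon>\<close>, of T]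
      eventually_ge_at_top[of 1]
  proof eventually_elim
    case (elim n)
    have "\<bar>rescaled_density n t (g n x) - q t x\<bar> < \<epsilon>" if x: "x \<in> F" and t: "T1 \<le> t" for x t
    proof -
      have nonneg: "0 \<le> rescaled_density n t (g n x)" "0 \<le> q t x"
        using seq_nonneg q_nonneg T1_pos x t by (auto intro!: mult_nonneg_nonneg qdens_nonneg)
      consider "T \<le> t" | "t \<le> T" "R \<le> dist \<rho> x" | "t \<le> T" "dist \<rho> x \<le> R" by linarith
      then show ?thesis
      proof cases
        case 1
        have "g n x \<in> V n" using g_min elim(4) x by simp
        then have "rescaled_density n t (g n x) \<le> \<epsilon> / 2" "q t x \<le> \<epsilon> / 2" using elim(1) q_T x 1 by auto
        then show ?thesis using nonneg \<open>0 < \<epsilon>\<close> by (auto simp: abs_less_iff)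
      next
        case 2
        then have "rescaled_density n t (g n x) \<le> \<epsilon> / 2" "q t x \<le> \<epsilon> / 2" using elim(2) q_R x t by auto
        then show ?thesis using nonneg \<open>0 < \<epsilon>\<close> by (auto simp: abs_less_iff)
      next
        case 3
        then show ?thesis using elim(3) x t by auto
      qed
    qed
    then show ?case by (auto simp: dist_real_def)
  qed
qed

end

theorem theorem1p2:
  fixes F :: "'a::metric_space set" and \<rho> :: 'a and \<nu> :: "'a measure"
    and q :: "real \<Rightarrow> 'a \<Rightarrow> real"
    and V :: "nat \<Rightarrow> 'a set" and \<mu> :: "nat \<Rightarrow> 'a \<Rightarrow> 'a \<Rightarrow> real"
    and \<alpha> \<beta> \<gamma> :: "nat \<Rightarrow> real" and g :: "nat \<Rightarrow> 'a \<Rightarrow> 'a" and T1 :: real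
  assumes F_compact: "\<forall>x r. 0 < r \<longrightarrow> compact (F \<inter> cball x r)"
    and rho_F: "\<rho> \<in> F"
    and nu_space: "space \<nu> = F"
    and nu_sets: "sets \<nu> = sets (restrict_space borel F)"
    and nu_radon: "\<forall>x r. emeasure \<nu> (F \<inter> cball x r) < \<infinity>"
    and nu_supp: "\<forall>x\<in>F. \<forall>r>0. 0 < emeasure \<nu> (F \<inter> ball x r)"
    and q_cont: "continuous_on ({0<..} \<times> F) (\<lambda>(t, x). q t x)"
    and q_nonneg: "\<forall>t>0. \<forall>x\<in>F. 0 \<le> q t x"
    and q_int: "\<forall>t>0. integrable \<nu> (q t) \<and> (\<integral>x. q t x \<partial>\<nu>) = 1"
    and graphs: "\<forall>n\<ge>1. wgraph (V n) (\<mu> n) \<and> \<rho> \<in> V n"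
    and seq_nonneg: "\<forall>n. 0 \<le> \<alpha> n \<and> 0 \<le> \<beta> n \<and> 0 \<le> \<gamma> n"
    and alpha_lim: "filterlim \<alpha> at_top sequentially"
    and beta_lim: "filterlim \<beta> at_top sequentially"
    and gamma_lim: "filterlim \<gamma> at_top sequentially"
    and g_min: "\<forall>n\<ge>1. \<forall>x\<in>F. g n x \<in> V n \<and> (\<forall>v\<in>V n. dist x (g n x) \<le> dist x v)"
    and T1_pos: "0 < T1"
    and A1a_lower: "\<exists>c1>0. \<forall>n\<ge>1. \<forall>x\<in>V n. \<forall>y\<in>V n.
                      real (gdist (\<mu> n) x y) \<ge> c1 * \<alpha> n * dist x y"
    and A1a_upper: "\<exists>\<alpha>' :: nat \<Rightarrow> real. (\<forall>n. 0 \<le> \<alpha>' n) \<and> \<alpha>' \<in> o(\<alpha>) \<and>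
                      (\<forall>r>0. \<exists>c2 n0. \<forall>n\<ge>n0. \<forall>x\<in>V n \<inter> ball \<rho> r. \<forall>y\<in>V n \<inter> ball \<rho> r.
                         real (gdist (\<mu> n) x y) \<le> c2 * \<alpha> n * dist x y + \<alpha>' n)"
    and A1b: "\<forall>r>0. \<forall>\<epsilon>>0. \<forall>\<^sub>F n in sequentially. \<forall>x\<in>F \<inter> ball \<rho> r. infdist x (V n) \<le> \<epsilon>"
    and A1c: "\<forall>x\<in>F. \<forall>r>0. ((\<lambda>n. ennreal (1 / \<beta> n) * gmeas (V n) (\<mu> n) (ball x r))
                 \<longlongrightarrow> emeasure \<nu> (F \<inter> ball x r)) sequentially"
    and A1d: "\<forall>a b x r. 0 < a \<longrightarrow> x \<in> F \<longrightarrow> 0 < r \<longrightarrow>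
                uniform_limit {a..b}
                  (\<lambda>n t. hitprob (\<mu> n) (nat \<lfloor>\<gamma> n * t\<rfloor>) \<rho> (ball x r))
                  (\<lambda>t. set_lebesgue_integral \<nu> (F \<inter> ball x r) (q t)) sequentially"
    and A2: "\<forall>a b r. 0 < a \<longrightarrow> 0 < r \<longrightarrow> (\<forall>\<epsilon>>0. \<exists>\<delta>>0. \<forall>\<^sub>F n in sequentially.
                \<forall>x\<in>gball (V n) (\<mu> n) \<rho> (\<alpha> n * r). \<forall>y\<in>gball (V n) (\<mu> n) \<rho> (\<alpha> n * r).
                  real (gdist (\<mu> n) x y) \<le> \<alpha> n * \<delta> \<longrightarrow>
                  (\<forall>t\<in>{a..b}. \<beta> n * \<bar>qdens (\<mu> n) (nat \<lfloor>\<gamma> n * t\<rfloor>) \<rho> x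
                                     - qdens (\<mu> n) (nat \<lfloor>\<gamma> n * t\<rfloor>) \<rho> y\<bar> \<le> \<epsilon>))"
    and midpoint: "\<forall>x\<in>F. \<forall>y\<in>F. \<exists>z\<in>F. dist x z = dist x y / 2 \<and> dist z y = dist x y / 2"
    and A3a_time: "\<forall>\<epsilon>>0. \<forall>\<^sub>F t in at_top. \<forall>x\<in>F. q t x \<le> \<epsilon>"
    and A3a_space: "\<forall>a b. 0 < a \<longrightarrow> (\<forall>\<epsilon>>0. \<forall>\<^sub>F r in at_top.
                      \<forall>x\<in>F - ball \<rho> r. \<forall>t\<in>{a..b}. q t x \<le> \<epsilon>)"
    and A3b_time: "\<forall>\<epsilon>>0. \<forall>\<^sub>F t in at_top. \<forall>\<^sub>F n in sequentially.
                      \<forall>x\<in>V n. \<beta> n * qdens (\<mu> n) (nat \<lfloor>\<gamma> n * t\<rfloor>) \<rho> x \<le> \<epsilon>"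
    and A3b_space: "\<forall>a b. 0 < a \<longrightarrow> (\<forall>\<epsilon>>0. \<forall>\<^sub>F r in at_top. \<forall>\<^sub>F n in sequentially.
                      \<forall>x\<in>V n - gball (V n) (\<mu> n) \<rho> (\<alpha> n * r). \<forall>t\<in>{a..b}.
                        \<beta> n * qdens (\<mu> n) (nat \<lfloor>\<gamma> n * t\<rfloor>) \<rho> x \<le> \<epsilon>)"
  shows "uniform_limit (F \<times> {T1..})
           (\<lambda>n (x, t). \<beta> n * qdens (\<mu> n) (nat \<lfloor>\<gamma> n * t\<rfloor>) \<rho> (g n x))
           (\<lambda>(x, t). q t x) sequentially"
  proof -
  interpret rescaled_walk_convergence F \<rho> \<nu> q V \<mu> \<alpha> \<beta> \<gamma> g T1
    by (unfold_locales; (fact assms)?) (use q_int midpoint in \<open>auto simp: has_midpoints_def\<close>)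
  show ?thesis by (rule uniform_convergence)
qed

end
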